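(* Let $G=(X,b,m,c)$ be a weighted graph, $p\in(1,\infty)$ and $o\in X$. Let $f\in D^p$ and let $(f_n)$ be a sequence in $D^p$. If $f_n\to f$ pointwise and $\limsup_{n\to\infty}\mathcal{E}_p(f_n)\le\mathcal{E}_p(f)$, then $\|f_n-f\|_{o,p}\to0$.
   Context: Weighted graph $G=(X,b,m,c)$: $X$ countably infinite; $b$ symmetric, nonnegative, zero on the diagonal, $\sum_yb(x,y)<\infty$; $m>0$; $c\colon X\to[0,\infty)$; $x\sim y$ iff $b(x,y)>0$; $X$ connected. $\mathcal{E}_p(f)=\frac12\sum_{x,y}b(x,y)|f(x)-f(y)|^p+\sum_xc(x)|f(x)|^p$, $D^p=\{f:\mathcal{E}_p(f)<\infty\}$, $\|f\|_{o,p}=(\mathcal{E}_p(f)+|f(o)|^p)^{1/p}$. *)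

theory Defs
  imports "HOL-Analysis.Analysis" "HOL-Library.Countable" "HOL-Library.Liminf_Limsup"
begin

definition weighted_graph ::
  "('a::countable \<Rightarrow> 'a \<Rightarrow> real) \<Rightarrow> ('a \<Rightarrow> real) \<Rightarrow> ('a \<Rightarrow> real) \<Rightarrow> bool" where
  "weighted_graph b m c \<longleftrightarrow>
     infinite (UNIV :: 'a set) \<and>
     (\<forall>x y. b x y = b y x) \<and> (\<forall>x y. 0 \<le> b x y) \<and> (\<forall>x. b x x = 0) \<and>
     (\<forall>x. (\<lambda>y. b x y) summable_on UNIV) \<and>
     (\<forall>x. 0 < m x) \<and> (\<forall>x. 0 \<le> c x) \<and>
     (\<forall>x y. (x, y) \<in> {(u, v). 0 < b u v}\<^sup>*)"

definition in_Dp :: "('a \<Rightarrow> 'a \<Rightarrow> real) \<Rightarrow> ('a \<Rightarrow> real) \<Rightarrow> real \<Rightarrow> ('a \<Rightarrow> real) \<Rightarrow> bool" where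
  "in_Dp b c p f \<longleftrightarrow>
     (\<lambda>(x, y). b x y * \<bar>f x - f y\<bar> powr p) summable_on UNIV \<and>
     (\<lambda>x. c x * \<bar>f x\<bar> powr p) summable_on UNIV"

definition energy :: "('a \<Rightarrow> 'a \<Rightarrow> real) \<Rightarrow> ('a \<Rightarrow> real) \<Rightarrow> real \<Rightarrow> ('a \<Rightarrow> real) \<Rightarrow> real" where
  "energy b c p f =
     (1/2) * (\<Sum>\<^sub>\<infinity>(x, y)\<in>UNIV. b x y * \<bar>f x - f y\<bar> powr p)
     + (\<Sum>\<^sub>\<infinity>x\<in>UNIV. c x * \<bar>f x\<bar> powr p)"

definition norm_op :: "('a \<Rightarrow> 'a \<Rightarrow> real) \<Rightarrow> ('a \<Rightarrow> real) \<Rightarrow> real \<Rightarrow> 'a \<Rightarrow> ('a \<Rightarrow> real) \<Rightarrow> real" where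
  "norm_op b c p v0 f = (energy b c p f + \<bar>f v0\<bar> powr p) powr (1 / p)"

end

theory Submission
  imports Defs
begin

text \<open>
  Since \<open>\<bar>x - y\<bar>\<^sup>p \<le> 2\<^sup>p (\<bar>x\<bar>\<^sup>p + \<bar>y\<bar>\<^sup>p)\<close>, the terms
  \<open>2\<^sup>p (\<bar>f\<^sub>n\<bar>\<^sup>p + \<bar>f\<bar>\<^sup>p) - \<bar>f\<^sub>n - f\<bar>\<^sup>p\<close> of each of the two series in the energy
  (taken over differences along edges for the first one) are nonnegative and converge pointwise
  to \<open>2\<^sup>p\<^sup>+\<^sup>1 \<bar>f\<bar>\<^sup>p\<close>. Fatou's lemma for these series yields
  \<open>limsup E(f\<^sub>n - f) \<le> 2\<^sup>p (limsup E(f\<^sub>n) - E(f)) \<le> 0\<close>, and the value at the base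
  point converges by pointwise convergence.
\<close>

lemma abs_diff_powr_le:
  fixes x y p :: real
  assumes "0 \<le> p"
  shows "\<bar>x - y\<bar> powr p \<le> 2 powr p * (\<bar>x\<bar> powr p + \<bar>y\<bar> powr p)"
proof -
  define M where "M = max \<bar>x\<bar> \<bar>y\<bar>"
  have "\<bar>x - y\<bar> powr p \<le> (2 * M) powr p"
    unfolding M_def using assms by (intro powr_mono2) auto
  also have "\<dots> = 2 powr p * M powr p"
    unfolding M_def by (simp add: powr_mult)
  also have "M powr p \<le> \<bar>x\<bar> powr p + \<bar>y\<bar> powr p"
    unfolding M_def by (simp add: max_def)
  finally show ?thesis
    by (simp add: mult_left_mono)
qed

lemma infsum_Fatou:
  fixes h :: "nat \<Rightarrow> 'i \<Rightarrow> real"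
  assumes nonneg: "\<And>n i. i \<in> A \<Longrightarrow> 0 \<le> h n i"
    and summable: "\<And>n. h n summable_on A"
    and lim: "\<And>i. i \<in> A \<Longrightarrow> (\<lambda>n. h n i) \<longlonglongrightarrow> g i"
    and "g summable_on A"
    and "a < infsum g A"
  shows "\<forall>\<^sub>F n in sequentially. a < infsum (h n) A"
proof -
  have "(sum g \<longlongrightarrow> infsum g A) (finite_subsets_at_top A)"
    using has_sum_infsum[OF \<open>g summable_on A\<close>] unfolding has_sum_def .
  then have "\<forall>\<^sub>F F in finite_subsets_at_top A. a < sum g F"
    using \<open>a < infsum g A\<close> by (rule order_tendstoD)
  then obtain F where F: "finite F" "F \<subseteq> A" "a < sum g F"
    unfolding eventually_finite_subsets_at_top by blast
  have "(\<lambda>n. sum (h n) F) \<longlonglongrightarrow> sum g F"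
    using F(2) by (intro tendsto_sum lim) auto
  then have "\<forall>\<^sub>F n in sequentially. a < sum (h n) F"
    using F(3) by (rule order_tendstoD)
  moreover have "sum (h n) F \<le> infsum (h n) A" for n
    using summable F(1,2) nonneg by (intro finite_sum_le_infsum) auto
  ultimately show ?thesis
    by (metis (mono_tags, lifting) eventually_mono less_le_trans)
qed

lemma eventually_weighted_powr_sum_diff_less:
  fixes w v :: "'i \<Rightarrow> real" and u :: "nat \<Rightarrow> 'i \<Rightarrow> real"
  assumes p: "0 < p" and w: "\<And>i. i \<in> A \<Longrightarrow> 0 \<le> w i"
    and lim: "\<And>i. i \<in> A \<Longrightarrow> (\<lambda>n. u n i) \<longlonglongrightarrow> v i"
    and summable_v: "(\<lambda>i. w i * \<bar>v i\<bar> powr p) summable_on A"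
    and summable_u: "\<And>n. (\<lambda>i. w i * \<bar>u n i\<bar> powr p) summable_on A"
    and "0 < \<delta>"
  shows "\<forall>\<^sub>F n in sequentially.
           (\<Sum>\<^sub>\<infinity>i\<in>A. w i * \<bar>u n i - v i\<bar> powr p)
             < 2 powr p * ((\<Sum>\<^sub>\<infinity>i\<in>A. w i * \<bar>u n i\<bar> powr p) - (\<Sum>\<^sub>\<infinity>i\<in>A. w i * \<bar>v i\<bar> powr p)) + \<delta>"
proof -
  define C :: real where "C = 2 powr p"
  define a where "a i = w i * \<bar>v i\<bar> powr p" for i
  define s where "s n i = w i * \<bar>u n i\<bar> powr p" for n i
  define t where "t n i = w i * \<bar>u n i - v i\<bar> powr p" for n i
  define h where "h n i = C * s n i + C * a i - t n i" for n i
  have summable_a: "a summable_on A"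
    using summable_v unfolding a_def .
  have summable_bound: "(\<lambda>i. C * s n i + C * a i) summable_on A" for n
    using summable_u summable_a
    unfolding s_def by (intro summable_on_add summable_on_cmult_right)
  have t_le: "t n i \<le> C * s n i + C * a i" if "i \<in> A" for n i
    using mult_left_mono[OF abs_diff_powr_le[of p "u n i" "v i"] w[OF that]] p
    unfolding t_def s_def a_def C_def by (simp add: algebra_simps)
  have t_nonneg: "0 \<le> t n i" if "i \<in> A" for n i
    using w[OF that] unfolding t_def by simp
  have summable_t: "t n summable_on A" for n
    using summable_bound t_le t_nonneg by (rule summable_on_comparison_test)
  have summable_h: "h n summable_on A" for n
    using summable_bound[of n] unfolding h_def
    by (rule summable_on_comparison_test) (use t_le t_nonneg in auto)
  have h_lim: "(\<lambda>n. h n i) \<longlonglongrightarrow> 2 * C * a i" if "i \<in> A" for i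
  proof -
    have "(\<lambda>n. C * (w i * \<bar>u n i\<bar> powr p) + C * a i - w i * \<bar>u n i - v i\<bar> powr p)
        \<longlonglongrightarrow> C * (w i * \<bar>v i\<bar> powr p) + C * a i - w i * \<bar>v i - v i\<bar> powr p"
      using p by (intro tendsto_intros lim[OF that]) auto
    then show ?thesis
      using p unfolding h_def s_def t_def a_def by (simp add: mult.assoc)
  qed
  have "2 * C * infsum a A - \<delta> < infsum (\<lambda>i. 2 * C * a i) A"
    using \<open>0 < \<delta>\<close> by (simp add: infsum_cmult_right')
  then have Fatou: "\<forall>\<^sub>F n in sequentially. 2 * C * infsum a A - \<delta> < infsum (h n) A"
    using t_le summable_h h_lim summable_on_cmult_right[OF summable_a]
    by (intro infsum_Fatou) (auto simp: h_def)
  have sum_split: "infsum (h n) A + infsum (t n) A = C * infsum (s n) A + C * infsum a A" for n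
  proof -
    have "infsum (h n) A + infsum (t n) A = infsum (\<lambda>i. C * s n i + C * a i) A"
      using summable_h summable_t by (simp add: infsum_add[symmetric] h_def)
    also have "\<dots> = C * infsum (s n) A + C * infsum a A"
      using summable_u summable_a unfolding s_def
      by (simp add: infsum_add summable_on_cmult_right infsum_cmult_right')
    finally show ?thesis .
  qed
  have "infsum (t n) A < C * (infsum (s n) A - infsum a A) + \<delta>"
    if "2 * C * infsum a A - \<delta> < infsum (h n) A" for n
    using that sum_split[of n] by (simp add: algebra_simps)
  with Fatou show ?thesis
    unfolding C_def t_def s_def a_def by (auto elim: eventually_mono)
qed

lemma energy_nonneg:
  assumes "\<And>x y. 0 \<le> b x y" and "\<And>x. 0 \<le> c x"
  shows "0 \<le> energy b c p f"
  unfolding energy_def using assms by (auto intro!: add_nonneg_nonneg infsum_nonneg)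

lemma eventually_energy_diff_less:
  fixes b :: "'a \<Rightarrow> 'a \<Rightarrow> real" and c f :: "'a \<Rightarrow> real" and fs :: "nat \<Rightarrow> 'a \<Rightarrow> real"
  assumes b: "\<And>x y. 0 \<le> b x y" and c: "\<And>x. 0 \<le> c x" and "0 < p"
    and f: "in_Dp b c p f" and fs: "\<And>n. in_Dp b c p (fs n)"
    and lim: "\<And>x. (\<lambda>n. fs n x) \<longlonglongrightarrow> f x"
    and "0 < \<delta>"
  shows "\<forall>\<^sub>F n in sequentially.
           energy b c p (fs n - f) < 2 powr p * (energy b c p (fs n) - energy b c p f) + \<delta>"
proof -
  define P where "P g = (\<Sum>\<^sub>\<infinity>(x, y)\<in>UNIV. b x y * \<bar>g x - g y\<bar> powr p)" for g :: "'a \<Rightarrow> real"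
  define V where "V g = (\<Sum>\<^sub>\<infinity>x\<in>UNIV. c x * \<bar>g x\<bar> powr p)" for g :: "'a \<Rightarrow> real"
  have "\<forall>\<^sub>F n in sequentially. P (fs n - f) < 2 powr p * (P (fs n) - P f) + \<delta>"
    using eventually_weighted_powr_sum_diff_less[where w = "\<lambda>(x, y). b x y"
        and u = "\<lambda>n (x, y). fs n x - fs n y" and v = "\<lambda>(x, y). f x - f y" and A = UNIV]
      f fs lim b \<open>0 < p\<close> \<open>0 < \<delta>\<close>
    unfolding P_def in_Dp_def by (simp add: case_prod_unfold algebra_simps tendsto_diff)
  moreover have "\<forall>\<^sub>F n in sequentially. V (fs n - f) < 2 powr p * (V (fs n) - V f) + \<delta> / 2"
    using eventually_weighted_powr_sum_diff_less[where w = c and u = fs and v = f and A = UNIV]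
      f fs lim c \<open>0 < p\<close> \<open>0 < \<delta>\<close>
    unfolding V_def in_Dp_def by simp
  moreover have "energy b c p g = P g / 2 + V g" for g
    unfolding energy_def P_def V_def by simp
  ultimately show ?thesis
    by (auto elim: eventually_elim2 simp: algebra_simps)
qed

lemma energy_diff_tendsto_zero:
  fixes b :: "'a \<Rightarrow> 'a \<Rightarrow> real" and c f :: "'a \<Rightarrow> real" and fs :: "nat \<Rightarrow> 'a \<Rightarrow> real"
  assumes b: "\<And>x y. 0 \<le> b x y" and c: "\<And>x. 0 \<le> c x" and "0 < p"
    and f: "in_Dp b c p f" and fs: "\<And>n. in_Dp b c p (fs n)"
    and lim: "\<And>x. (\<lambda>n. fs n x) \<longlonglongrightarrow> f x"
    and limsup: "limsup (\<lambda>n. ereal (energy b c p (fs n))) \<le> ereal (energy b c p f)"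
  shows "(\<lambda>n. energy b c p (fs n - f)) \<longlonglongrightarrow> 0"
proof (rule order_tendstoI)
  fix a :: real
  assume "a < 0"
  moreover have "0 \<le> energy b c p g" for g
    using b c by (rule energy_nonneg)
  ultimately show "\<forall>\<^sub>F n in sequentially. a < energy b c p (fs n - f)"
    by (auto intro!: always_eventually intro: less_le_trans)
next
  fix \<epsilon> :: real
  assume "0 < \<epsilon>"
  define C :: real where "C = 2 powr p"
  define \<delta> where "\<delta> = \<epsilon> / (C + 1)"
  have "0 < C + 1"
    by (simp add: C_def add_pos_pos)
  then have "0 < \<delta>" and \<epsilon>_eq: "\<epsilon> = (C + 1) * \<delta>"
    using \<open>0 < \<epsilon>\<close> by (simp_all add: \<delta>_def)
  have "limsup (\<lambda>n. ereal (energy b c p (fs n))) < ereal (energy b c p f + \<delta>)"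
    using limsup \<open>0 < \<delta>\<close> by (simp add: le_less_trans)
  then have "\<forall>\<^sub>F n in sequentially. energy b c p (fs n) < energy b c p f + \<delta>"
    by (auto dest: Limsup_lessD)
  moreover have "\<forall>\<^sub>F n in sequentially.
      energy b c p (fs n - f) < C * (energy b c p (fs n) - energy b c p f) + \<delta>"
    unfolding C_def using b c \<open>0 < p\<close> f fs lim \<open>0 < \<delta>\<close> by (rule eventually_energy_diff_less)
  ultimately show "\<forall>\<^sub>F n in sequentially. energy b c p (fs n - f) < \<epsilon>"
  proof eventually_elim
    case (elim n)
    have "C * (energy b c p (fs n) - energy b c p f) \<le> C * \<delta>"
      using elim(1) by (simp add: C_def)
    with elim(2) show ?case
      unfolding \<epsilon>_eq distrib_right by linarith
  qed
qed

theorem lemma2p4: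
  fixes b :: "'a::countable \<Rightarrow> 'a \<Rightarrow> real" and m c :: "'a \<Rightarrow> real"
    and p :: real and v0 :: 'a and f :: "'a \<Rightarrow> real" and fs :: "nat \<Rightarrow> 'a \<Rightarrow> real"
  assumes "weighted_graph b m c"
    and "1 < p"
    and "in_Dp b c p f"
    and "\<forall>n. in_Dp b c p (fs n)"
    and "\<forall>x. (\<lambda>n. fs n x) \<longlonglongrightarrow> f x"
    and "limsup (\<lambda>n. ereal (energy b c p (fs n))) \<le> ereal (energy b c p f)"
  shows "(\<lambda>n. norm_op b c p v0 (fs n - f)) \<longlonglongrightarrow> 0"
proof -
  have b: "\<And>x y. 0 \<le> b x y" and c: "\<And>x. 0 \<le> c x" and "0 < p"
    using assms(1,2) unfolding weighted_graph_def by auto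
  have "(\<lambda>n. energy b c p (fs n - f)) \<longlonglongrightarrow> 0"
    using b c \<open>0 < p\<close> assms(3-6) by (intro energy_diff_tendsto_zero) auto
  moreover have "(\<lambda>n. \<bar>(fs n - f) v0\<bar> powr p) \<longlonglongrightarrow> 0"
  proof (rule tendsto_zero_powrI)
    show "(\<lambda>n. \<bar>(fs n - f) v0\<bar>) \<longlonglongrightarrow> 0"
      using tendsto_diff[OF assms(5)[rule_format, of v0] tendsto_const[of "f v0"]]
      by (simp add: tendsto_rabs_zero_iff)
  qed (use \<open>0 < p\<close> in auto)
  ultimately have "(\<lambda>n. energy b c p (fs n - f) + \<bar>(fs n - f) v0\<bar> powr p) \<longlonglongrightarrow> 0"
    using tendsto_add by fastforce
  from tendsto_zero_powrI[OF this tendsto_const[of "1 / p"]] show ?thesis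
    unfolding norm_op_def using energy_nonneg[of b c] b c \<open>0 < p\<close> by auto
qed

end
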